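(* Let $n\ge 2k+1$, $k\ge1$, and let $U=(u_0,u_1,\dots,u_i)$ be a path in $J(n;k,k+1)$. Then: (i) if $i=3$, there is exactly one cycle of length $6$ in $J(n;k,k+1)$ containing $U$; (ii) if $i=2$ and $u_2\in V_1$, there are exactly $n-k-1$ cycles of length $6$ containing $U$; (iii) if $i=2$ and $u_2\in V_2$, there are exactly $k$ cycles of length $6$ containing $U$; (iv) if $i=1$, there are exactly $k(n-k-1)$ cycles of length $6$ containing $U$.
   Context: The doubled Johnson graph $J(n;k,k+1)$ is the bipartite graph with vertex set $V_1\cup V_2$, where $V_1=\binom{[n]}{k}$ and $V_2=\binom{[n]}{k+1}$ are the sets of $k$-subsets and $(k+1)$-subsets of $[n]=\{1,\dots,n\}$, and two vertices $u,v$ are adjacent iff $u\subset v$ or $v\subset u$. A path $(u_0,\dots,u_i)$ is a sequence of distinct vertices with consecutive ones adjacent; a cycle contains the path if it contains all its vertices and edges. *)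

theory Defs
  imports Main
begin

definition V1 :: "nat \<Rightarrow> nat \<Rightarrow> nat set set" where
  "V1 n k = {A. A \<subseteq> {1..n} \<and> card A = k}"

definition V2 :: "nat \<Rightarrow> nat \<Rightarrow> nat set set" where
  "V2 n k = {A. A \<subseteq> {1..n} \<and> card A = Suc k}"

definition jadj :: "nat \<Rightarrow> nat \<Rightarrow> nat set \<Rightarrow> nat set \<Rightarrow> bool" where
  "jadj n k u v \<longleftrightarrow> u \<in> V1 n k \<union> V2 n k \<and> v \<in> V1 n k \<union> V2 n k \<and> (u \<subset> v \<or> v \<subset> u)"

definition is_path :: "nat \<Rightarrow> nat \<Rightarrow> nat set list \<Rightarrow> bool" where
  "is_path n k us \<longleftrightarrow> us \<noteq> [] \<and> distinct us \<and> set us \<subseteq> V1 n k \<union> V2 n k \<and>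
     (\<forall>j. Suc j < length us \<longrightarrow> jadj n k (us ! j) (us ! Suc j))"

definition path_edges :: "'a list \<Rightarrow> 'a set set" where
  "path_edges us = {{us ! j, us ! Suc j} | j. Suc j < length us}"

definition is_cycle_seq :: "nat \<Rightarrow> nat \<Rightarrow> nat \<Rightarrow> nat set list \<Rightarrow> bool" where
  "is_cycle_seq n k m cs \<longleftrightarrow> length cs = m \<and> 3 \<le> m \<and> distinct cs \<and>
     set cs \<subseteq> V1 n k \<union> V2 n k \<and>
     (\<forall>j<m. jadj n k (cs ! j) (cs ! ((Suc j) mod m)))"

definition cycle_edges :: "'a list \<Rightarrow> 'a set set" where
  "cycle_edges cs = {{cs ! j, cs ! ((Suc j) mod length cs)} | j. j < length cs}"

text \<open>A cycle is a subgraph: its vertex set and edge set (so rotations/reflections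
  of the vertex sequence give the same cycle).\<close>
definition cycles :: "nat \<Rightarrow> nat \<Rightarrow> nat \<Rightarrow> (nat set set \<times> nat set set set) set" where
  "cycles n k m = {(set cs, cycle_edges cs) | cs. is_cycle_seq n k m cs}"

definition contains_path :: "(nat set set \<times> nat set set set) \<Rightarrow> nat set list \<Rightarrow> bool" where
  "contains_path C us \<longleftrightarrow> set us \<subseteq> fst C \<and> path_edges us \<subseteq> snd C"

definition num_cycles_containing :: "nat \<Rightarrow> nat \<Rightarrow> nat \<Rightarrow> nat set list \<Rightarrow> nat" where
  "num_cycles_containing n k m us = card {C \<in> cycles n k m. contains_path C us}"

end

theory Submission
  imports Defs
begin

text \<open>
  The three \<open>k\<close>-sets on a 6-cycle pairwise meet in a common \<open>(k-1)\<close>-set \<open>C\<close>, and the six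
  vertices of the cycle are exactly the sets strictly between \<open>C\<close> and \<open>C \<union> X\<close> for a
  3-set \<open>X\<close> disjoint from \<open>C\<close>: a hexagon in the Boolean lattice. Hence 6-cycles correspond
  bijectively to such frames \<open>(C, X)\<close>, and a cycle contains a path iff its hexagon contains the
  vertices of the path. The frames whose hexagon contains an edge \<open>A \<subset> insert a A\<close> are
  \<open>(A - {b}, {b, a, z})\<close> with \<open>b \<in> A\<close> and \<open>z \<notin> insert a A\<close>, which gives \<open>k (n - k - 1)\<close>;
  a further vertex of the path fixes \<open>b\<close> (a \<open>k\<close>-set \<open>insert a A - {b}\<close>) or \<open>z\<close>
  (a \<open>(k+1)\<close>-set \<open>insert z A\<close>), and a path with four vertices fixes both.
\<close>

lemma jadj_sym: "jadj n k u v \<longleftrightarrow> jadj n k v u"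
  unfolding jadj_def by blast

lemma vertex_finite: "A \<in> V1 n k \<union> V2 n k \<Longrightarrow> finite A"
  unfolding V1_def V2_def by (auto intro: finite_subset)

lemma jadj_V1_E:
  assumes "jadj n k u v" "u \<in> V1 n k"
  shows "v \<in> V2 n k \<and> (\<exists>a. a \<in> {1..n} \<and> a \<notin> u \<and> v = insert a u)"
proof -
  have fu: "finite u" and fv: "finite v" using assms vertex_finite unfolding jadj_def by blast+
  have cu: "card u = k" using assms(2) by (simp add: V1_def)
  have cv: "card v \<ge> k" "card v \<le> Suc k" "v \<subseteq> {1..n}"
    using assms(1) unfolding jadj_def V1_def V2_def by auto
  have "\<not> v \<subset> u" using psubset_card_mono[OF fu] cu cv by (metis leD)
  hence uv: "u \<subset> v" using assms(1) unfolding jadj_def by blast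
  hence "card u < card v" using psubset_card_mono[OF fv] by blast
  hence cv2: "card v = Suc k" using cu cv by simp
  hence "v \<in> V2 n k" using cv by (simp add: V2_def)
  moreover have "card (v - u) = 1" using card_Diff_subset[OF fu] uv cu cv2 by auto
  then obtain a where "v - u = {a}" using card_1_singletonE by blast
  hence "a \<in> {1..n} \<and> a \<notin> u \<and> v = insert a u" using uv cv by blast
  ultimately show ?thesis by blast
qed

lemma jadj_V2_E:
  assumes "jadj n k u v" "u \<in> V2 n k"
  shows "v \<in> V1 n k \<and> (\<exists>a. a \<in> {1..n} \<and> a \<notin> v \<and> u = insert a v)"
proof -
  have "v \<in> V1 n k"
  proof (rule ccontr)
    assume "v \<notin> V1 n k"
    hence v2: "v \<in> V2 n k" using assms(1) unfolding jadj_def by blast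
    hence "card u = card v" using assms(2) by (simp add: V2_def)
    moreover have "finite u" "finite v" using assms(2) v2 vertex_finite by blast+
    moreover have "u \<subset> v \<or> v \<subset> u" using assms(1) unfolding jadj_def by blast
    ultimately show False using psubset_card_mono by (metis less_irrefl)
  qed
  moreover have "jadj n k v u" using assms(1) jadj_sym by simp
  ultimately show ?thesis using jadj_V1_E[of n k v u] by blast
qed

lemma jadj_insert:
  assumes "A \<in> V1 n k" "a \<in> {1..n}" "a \<notin> A"
  shows "jadj n k A (insert a A)" "insert a A \<in> V2 n k"
proof -
  have "insert a A \<subseteq> {1..n}" "card (insert a A) = Suc k"
    using assms vertex_finite[of A n k] by (auto simp: V1_def)
  thus V2: "insert a A \<in> V2 n k" by (simp add: V2_def)
  have "A \<subset> insert a A" using assms(3) by blast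
  thus "jadj n k A (insert a A)" using assms(1) V2 unfolding jadj_def by blast
qed

lemma is_path_jadj: "is_path n k us \<Longrightarrow> Suc j < length us \<Longrightarrow> jadj n k (us ! j) (us ! Suc j)"
  unfolding is_path_def by blast

lemma is_path_rev:
  assumes "is_path n k us"
  shows "is_path n k (rev us)"
proof -
  have "jadj n k (rev us ! j) (rev us ! Suc j)" if "Suc j < length us" for j
  proof -
    define m where "m = length us - Suc (Suc j)"
    have m: "Suc m < length us" "length us - Suc j = Suc m" using that unfolding m_def by auto
    then have "rev us ! j = us ! Suc m" "rev us ! Suc j = us ! m"
      using that by (simp_all add: rev_nth m_def)
    then show ?thesis using is_path_jadj[OF assms m(1)] jadj_sym by simp
  qed
  then show ?thesis using assms unfolding is_path_def by simp
qed

lemma less_6_iff: "(j::nat) < 6 \<longleftrightarrow> j = 0 \<or> j = 1 \<or> j = 2 \<or> j = 3 \<or> j = 4 \<or> j = 5"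
  by arith

lemma is_cycle_seq_6:
  "is_cycle_seq n k 6 [a,b,c,d,e,f] \<longleftrightarrow> distinct [a,b,c,d,e,f] \<and>
     {a,b,c,d,e,f} \<subseteq> V1 n k \<union> V2 n k \<and> jadj n k a b \<and> jadj n k b c \<and> jadj n k c d
     \<and> jadj n k d e \<and> jadj n k e f \<and> jadj n k f a"
proof -
  have "(\<forall>j<(6::nat). P j) \<longleftrightarrow> P 0 \<and> P 1 \<and> P 2 \<and> P 3 \<and> P 4 \<and> P 5" for P
    unfolding less_6_iff by blast
  then show ?thesis unfolding is_cycle_seq_def by simp
qed

lemma cycle_edges_6:
  "cycle_edges [a,b,c,d,e,f] = {{a,b},{b,c},{c,d},{d,e},{e,f},{f,a}}"
proof -
  have l: "length [a,b,c,d,e,f] = 6" by simp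
  have img: "{g j |j. j < (6::nat)} = g ` {0,1,2,3,4,5}" for g :: "nat \<Rightarrow> 'b"
    using less_6_iff by auto
  show ?thesis unfolding cycle_edges_def l img by (simp add: insert_commute)
qed

lemma is_cycle_seq_6_rotate:
  assumes "is_cycle_seq n k 6 [c0,c1,c2,c3,c4,c5]"
  shows "is_cycle_seq n k 6 [c1,c2,c3,c4,c5,c0]"
    and "set [c1,c2,c3,c4,c5,c0] = set [c0,c1,c2,c3,c4,c5]"
    and "cycle_edges [c1,c2,c3,c4,c5,c0] = cycle_edges [c0,c1,c2,c3,c4,c5]"
proof -
  have "distinct [c1,c2,c3,c4,c5,c0]"
    using distinct1_rotate[of "[c0,c1,c2,c3,c4,c5]"] assms unfolding is_cycle_seq_6 by simp
  then show "is_cycle_seq n k 6 [c1,c2,c3,c4,c5,c0]"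
    using assms unfolding is_cycle_seq_6 by blast
  show "set [c1,c2,c3,c4,c5,c0] = set [c0,c1,c2,c3,c4,c5]" by (simp add: insert_commute)
  show "cycle_edges [c1,c2,c3,c4,c5,c0] = cycle_edges [c0,c1,c2,c3,c4,c5]"
    unfolding cycle_edges_6 by (simp add: insert_commute)
qed

subsection \<open>Hexagons\<close>

definition hexagon :: "nat set \<times> nat set \<Rightarrow> nat set set" where
  "hexagon p = {S. fst p \<subset> S \<and> S \<subset> fst p \<union> snd p}"

definition frames :: "nat \<Rightarrow> nat \<Rightarrow> (nat set \<times> nat set) set" where
  "frames n k = {(C,X). C \<subseteq> {1..n} \<and> Suc (card C) = k \<and> X \<subseteq> {1..n} \<and> C \<inter> X = {} \<and> card X = 3}"

definition frame_triple :: "nat \<Rightarrow> nat \<Rightarrow> nat set \<Rightarrow> nat \<Rightarrow> nat \<Rightarrow> nat \<Rightarrow> bool" where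
  "frame_triple n k C x y z \<longleftrightarrow> C \<subseteq> {1..n} \<and> Suc (card C) = k \<and> {x,y,z} \<subseteq> {1..n}
     \<and> x \<notin> C \<and> y \<notin> C \<and> z \<notin> C \<and> x \<noteq> y \<and> y \<noteq> z \<and> x \<noteq> z"

definition hexagon_walk :: "nat set \<Rightarrow> nat \<Rightarrow> nat \<Rightarrow> nat \<Rightarrow> nat set list" where
  "hexagon_walk C x y z = [insert x C, insert x (insert y C), insert y C, insert y (insert z C),
                           insert z C, insert z (insert x C)]"

definition induced_edges :: "nat \<Rightarrow> nat \<Rightarrow> nat set set \<Rightarrow> nat set set set" where
  "induced_edges n k S = {{u,v} | u v. u \<in> S \<and> v \<in> S \<and> jadj n k u v}"

definition hexagon_cycle :: "nat \<Rightarrow> nat \<Rightarrow> nat set \<times> nat set \<Rightarrow> nat set set \<times> nat set set set" where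
  "hexagon_cycle n k p = (hexagon p, induced_edges n k (hexagon p))"

lemma mem_hexagon: "S \<in> hexagon p \<longleftrightarrow> fst p \<subset> S \<and> S \<subset> fst p \<union> snd p"
  by (simp add: hexagon_def)

lemma frame_triple_in_frames: "frame_triple n k C x y z \<Longrightarrow> (C,{x,y,z}) \<in> frames n k"
  unfolding frame_triple_def frames_def by auto

lemma frames_E:
  assumes "p \<in> frames n k"
  obtains C x y z where "p = (C,{x,y,z})" "frame_triple n k C x y z"
proof -
  obtain C X where p: "p = (C,X)" "C \<subseteq> {1..n}" "Suc (card C) = k" "X \<subseteq> {1..n}"
    "C \<inter> X = {}" "card X = 3"
    using assms unfolding frames_def by blast
  then obtain x y z where "X = {x,y,z}" "x \<noteq> y" "y \<noteq> z" "x \<noteq> z" using card_3_iff by metis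
  with p show thesis using that unfolding frame_triple_def by auto
qed

lemma frame_triple_V1:
  assumes "frame_triple n k C x y z"
  shows "insert x C \<in> V1 n k" "insert y C \<in> V1 n k" "insert z C \<in> V1 n k"
proof -
  have "finite C" using assms unfolding frame_triple_def by (meson finite_atLeastAtMost finite_subset)
  then show "insert x C \<in> V1 n k" "insert y C \<in> V1 n k" "insert z C \<in> V1 n k"
    using assms unfolding frame_triple_def V1_def by auto
qed

lemma set_hexagon_walk:
  assumes "x \<notin> C" "y \<notin> C" "z \<notin> C" "x \<noteq> y" "y \<noteq> z" "x \<noteq> z"
  shows "set (hexagon_walk C x y z) = hexagon (C, {x,y,z})"
proof
  show "set (hexagon_walk C x y z) \<subseteq> hexagon (C, {x,y,z})"
    using assms unfolding hexagon_walk_def hexagon_def by auto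
  show "hexagon (C, {x,y,z}) \<subseteq> set (hexagon_walk C x y z)"
  proof
    fix S assume "S \<in> hexagon (C, {x,y,z})"
    hence S: "C \<subset> S" "S \<subset> C \<union> {x,y,z}" by (auto simp: hexagon_def)
    define Y where "Y = S \<inter> {x,y,z}"
    have SY: "S = C \<union> Y" using S unfolding Y_def by blast
    have "Y \<in> Pow {x,y,z}" "Y \<noteq> {}" "Y \<noteq> {x,y,z}" using S SY unfolding Y_def by auto
    hence "Y = {x} \<or> Y = {y} \<or> Y = {z} \<or> Y = {x,y} \<or> Y = {y,z} \<or> Y = {x,z}"
      by (simp add: Pow_insert) blast
    thus "S \<in> set (hexagon_walk C x y z)" unfolding SY hexagon_walk_def by auto
  qed
qed

lemma hexagon_walk_is_cycle_seq:
  assumes v: "frame_triple n k C x y z"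
  shows "is_cycle_seq n k 6 (hexagon_walk C x y z)"
proof -
  note V = frame_triple_V1[OF v]
  have d: "x \<notin> C" "y \<notin> C" "z \<notin> C" "x \<noteq> y" "y \<noteq> z" "x \<noteq> z" "x \<in> {1..n}" "y \<in> {1..n}" "z \<in> {1..n}"
    using v unfolding frame_triple_def by auto
  have "jadj n k (insert x C) (insert x (insert y C))" "insert x (insert y C) \<in> V2 n k"
    using jadj_insert[OF V(1), of y] d by (auto simp: insert_commute)
  moreover have "jadj n k (insert y C) (insert y (insert z C))" "insert y (insert z C) \<in> V2 n k"
    using jadj_insert[OF V(2), of z] d by (auto simp: insert_commute)
  moreover have "jadj n k (insert z C) (insert z (insert x C))" "insert z (insert x C) \<in> V2 n k"
    using jadj_insert[OF V(3), of x] d by (auto simp: insert_commute)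
  ultimately have up: "jadj n k (insert x C) (insert x (insert y C))" "insert x (insert y C) \<in> V2 n k"
    "jadj n k (insert y C) (insert y (insert z C))" "insert y (insert z C) \<in> V2 n k"
    "jadj n k (insert z C) (insert z (insert x C))" "insert z (insert x C) \<in> V2 n k"
    by blast+
  have down: "jadj n k (insert x (insert y C)) (insert y C)"
    "jadj n k (insert y (insert z C)) (insert z C)" "jadj n k (insert z (insert x C)) (insert x C)"
    using jadj_insert[OF V(2), of x] jadj_insert[OF V(3), of y] jadj_insert[OF V(1), of z] d jadj_sym
    by blast+
  have "distinct (map (\<lambda>S. (x \<in> S, y \<in> S, z \<in> S)) (hexagon_walk C x y z))"
    using d unfolding hexagon_walk_def by simp
  hence "distinct (hexagon_walk C x y z)" by (simp add: distinct_map)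
  then show ?thesis unfolding hexagon_walk_def is_cycle_seq_6
    using V up down by (simp add: hexagon_walk_def)
qed

lemma cycle_edges_hexagon_walk:
  assumes v: "frame_triple n k C x y z"
  shows "cycle_edges (hexagon_walk C x y z) = induced_edges n k (set (hexagon_walk C x y z))"
proof
  have d: "x \<notin> C" "y \<notin> C" "z \<notin> C" "x \<noteq> y" "y \<noteq> z" "x \<noteq> z"
    using v unfolding frame_triple_def by auto
  have edge: "{u,w} \<in> induced_edges n k S" if "u \<in> S" "w \<in> S" "jadj n k u w" for u w S
    unfolding induced_edges_def using that by blast
  have "jadj n k (insert x C) (insert x (insert y C))" "jadj n k (insert x (insert y C)) (insert y C)"
    "jadj n k (insert y C) (insert y (insert z C))" "jadj n k (insert y (insert z C)) (insert z C)"
    "jadj n k (insert z C) (insert z (insert x C))" "jadj n k (insert z (insert x C)) (insert x C)"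
    using hexagon_walk_is_cycle_seq[OF v] unfolding hexagon_walk_def is_cycle_seq_6 by blast+
  then show "cycle_edges (hexagon_walk C x y z) \<subseteq> induced_edges n k (set (hexagon_walk C x y z))"
    unfolding hexagon_walk_def cycle_edges_6
    by (intro insert_subsetI empty_subsetI edge) simp_all
  have chord_free: "{u,w} \<in> cycle_edges (hexagon_walk C x y z) \<or> {w,u} \<in> cycle_edges (hexagon_walk C x y z)"
    if "u \<in> set (hexagon_walk C x y z)" "w \<in> set (hexagon_walk C x y z)" "u \<subset> w" for u w
  proof -
    have "u = insert x C \<or> u = insert x (insert y C) \<or> u = insert y C \<or> u = insert y (insert z C)
        \<or> u = insert z C \<or> u = insert z (insert x C)"
      "w = insert x C \<or> w = insert x (insert y C) \<or> w = insert y C \<or> w = insert y (insert z C)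
        \<or> w = insert z C \<or> w = insert z (insert x C)"
      using that(1,2) unfolding hexagon_walk_def by simp_all
    then show ?thesis using that(3) d unfolding cycle_edges_6 hexagon_walk_def
      by (elim disjE) (simp_all add: psubset_eq)
  qed
  show "induced_edges n k (set (hexagon_walk C x y z)) \<subseteq> cycle_edges (hexagon_walk C x y z)"
  proof
    fix e assume "e \<in> induced_edges n k (set (hexagon_walk C x y z))"
    then obtain u w where e: "e = {u,w}" "u \<in> set (hexagon_walk C x y z)"
      "w \<in> set (hexagon_walk C x y z)" "u \<subset> w \<or> w \<subset> u"
      unfolding induced_edges_def jadj_def by blast
    have "{w,u} = {u,w}" by (rule insert_commute)
    then show "e \<in> cycle_edges (hexagon_walk C x y z)"
      using e chord_free[OF e(2,3)] chord_free[OF e(3,2)] by metis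
  qed
qed

lemma hexagon_cycle_hexagon_walk:
  assumes "frame_triple n k C x y z"
  shows "hexagon_cycle n k (C,{x,y,z}) = (set (hexagon_walk C x y z), cycle_edges (hexagon_walk C x y z))"
proof -
  have "set (hexagon_walk C x y z) = hexagon (C,{x,y,z})"
    using assms unfolding frame_triple_def by (intro set_hexagon_walk) auto
  then show ?thesis unfolding hexagon_cycle_def using cycle_edges_hexagon_walk[OF assms] by simp
qed

text \<open>Write \<open>c1 = insert p c0\<close> and \<open>c2 = c1 - {q}\<close>, so \<open>c0 = insert q I\<close> and
  \<open>c2 = insert p I\<close>; on the other side \<open>c5 = insert r c0\<close>. The set \<open>c4\<close> must also drop \<open>q\<close>:
  otherwise \<open>c4 \<subseteq> c3\<close> forces \<open>c3 = insert q c2\<close>, hence \<open>r = p\<close> and \<open>c5 = c1\<close>.\<close>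
lemma is_cycle_seq_6_eq_hexagon_walk:
  assumes cy: "is_cycle_seq n k 6 [c0,c1,c2,c3,c4,c5]" and c0V: "c0 \<in> V1 n k"
  obtains C x y z where "frame_triple n k C x y z" "[c0,c1,c2,c3,c4,c5] = hexagon_walk C x y z"
proof -
  have dist: "distinct [c0,c1,c2,c3,c4,c5]" and J01: "jadj n k c0 c1" and J12: "jadj n k c1 c2"
    and J23: "jadj n k c2 c3" and J34: "jadj n k c3 c4" and J45: "jadj n k c4 c5"
    and J50: "jadj n k c5 c0"
    using cy unfolding is_cycle_seq_6 by blast+
  obtain p where p: "p \<in> {1..n}" "p \<notin> c0" "c1 = insert p c0" and c1V: "c1 \<in> V2 n k"
    using jadj_V1_E[OF J01 c0V] by blast
  obtain q where q: "q \<in> {1..n}" "q \<notin> c2" "c1 = insert q c2" and c2V: "c2 \<in> V1 n k"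
    using jadj_V2_E[OF J12 c1V] by blast
  have qp: "q \<noteq> p"
  proof
    assume "q = p"
    hence "c0 = c2" using p q insert_ident by metis
    thus False using dist by simp
  qed
  have qc0: "q \<in> c0" using p q qp by blast
  define I where "I = c0 - {q}"
  have c0I: "c0 = insert q I" "q \<notin> I" using qc0 unfolding I_def by blast+
  have "c2 = c1 - {q}" using q by simp
  also have "\<dots> = insert p I" using p(3) qp unfolding I_def by auto
  finally have c2I: "c2 = insert p I" .
  obtain r where r: "r \<in> {1..n}" "r \<notin> c0" "c5 = insert r c0" and c5V: "c5 \<in> V2 n k"
    using jadj_V1_E[OF jadj_sym[THEN iffD1, OF J50] c0V] by blast
  obtain s where s: "s \<notin> c4" "c5 = insert s c4" and c4V: "c4 \<in> V1 n k"
    using jadj_V2_E[OF jadj_sym[THEN iffD1, OF J45] c5V] by blast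
  have sr: "s \<noteq> r"
  proof
    assume "s = r"
    hence "c0 = c4" using r s insert_ident by metis
    thus False using dist by simp
  qed
  have "c4 = c5 - {s}" using s by simp
  also have "\<dots> = insert r (c0 - {s})" using r(3) sr by auto
  finally have c4I: "c4 = insert r (c0 - {s})" .
  obtain t where t: "t \<notin> c2" "c3 = insert t c2"
    using jadj_V1_E[OF J23 c2V] by blast
  have c43: "c4 \<subseteq> c3" using jadj_V1_E[OF jadj_sym[THEN iffD1, OF J34] c4V] by blast
  have sq: "s = q"
  proof (rule ccontr)
    assume "s \<noteq> q"
    hence "q \<in> c4" using c4I qc0 by blast
    hence "q = t" using c43 t c2I c0I qp by blast
    have "r \<in> c3" using c43 c4I by blast
    hence "r = p" using t c2I c0I r \<open>q = t\<close> by blast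
    hence "c5 = c1" using r p by simp
    thus False using dist by simp
  qed
  have c4I': "c4 = insert r I" using c4I sq unfolding I_def by simp
  have rp: "r \<noteq> p"
  proof
    assume "r = p" hence "c4 = c2" using c4I' c2I by simp
    thus False using dist by simp
  qed
  have "r = t" using c43 c4I' t c2I r(2) c0I rp by blast
  hence c3I: "c3 = insert p (insert r I)" using t c2I by (simp add: insert_commute)
  have "finite c0" using c0V vertex_finite by blast
  moreover have "card c0 = k" "c0 \<subseteq> {1..n}" using c0V by (auto simp: V1_def)
  ultimately have "Suc (card I) = k" "I \<subseteq> {1..n}" using c0I by auto
  hence "frame_triple n k I q p r" unfolding frame_triple_def using p q r c0I qp rp qc0 by auto
  moreover have "[c0,c1,c2,c3,c4,c5] = hexagon_walk I q p r"
    unfolding hexagon_walk_def using c0I c2I c3I c4I' p r by (simp add: insert_commute)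
  ultimately show thesis using that by blast
qed

lemma cycles_6_eq: "cycles n k 6 = hexagon_cycle n k ` frames n k"
proof
  have from_V1: "(set [c0,c1,c2,c3,c4,c5], cycle_edges [c0,c1,c2,c3,c4,c5]) \<in> hexagon_cycle n k ` frames n k"
    if cy: "is_cycle_seq n k 6 [c0,c1,c2,c3,c4,c5]" and c0: "c0 \<in> V1 n k" for c0 c1 c2 c3 c4 c5
  proof -
    obtain C x y z where v: "frame_triple n k C x y z" and e: "[c0,c1,c2,c3,c4,c5] = hexagon_walk C x y z"
      using cy c0 by (rule is_cycle_seq_6_eq_hexagon_walk)
    have "(set [c0,c1,c2,c3,c4,c5], cycle_edges [c0,c1,c2,c3,c4,c5]) = hexagon_cycle n k (C,{x,y,z})"
      unfolding e hexagon_cycle_hexagon_walk[OF v] ..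
    then show ?thesis using frame_triple_in_frames[OF v] by (rule image_eqI)
  qed
  show "cycles n k 6 \<subseteq> hexagon_cycle n k ` frames n k"
  proof
    fix Cy assume "Cy \<in> cycles n k 6"
    then obtain cs where Cy: "Cy = (set cs, cycle_edges cs)" and cy: "is_cycle_seq n k 6 cs"
      unfolding cycles_def by blast
    have "length cs = 6" using cy unfolding is_cycle_seq_def by blast
    then obtain c0 c1 c2 c3 c4 c5 where cs: "cs = [c0,c1,c2,c3,c4,c5]"
      by (auto simp: length_Suc_conv numeral_eq_Suc)
    note cy6 = cy[unfolded cs]
    show "Cy \<in> hexagon_cycle n k ` frames n k"
    proof (cases "c0 \<in> V1 n k")
      case True
      then show ?thesis using from_V1[OF cy6] unfolding Cy cs by blast
    next
      case False
      then have "c0 \<in> V2 n k" "jadj n k c0 c1" using cy6 unfolding is_cycle_seq_6 by blast+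
      then have "c1 \<in> V1 n k" using jadj_V2_E by blast
      with from_V1[OF is_cycle_seq_6_rotate(1)[OF cy6]] show ?thesis
        unfolding Cy cs is_cycle_seq_6_rotate(2,3)[OF cy6] .
    qed
  qed
  show "hexagon_cycle n k ` frames n k \<subseteq> cycles n k 6"
  proof
    fix Cy assume "Cy \<in> hexagon_cycle n k ` frames n k"
    then obtain p where p: "p \<in> frames n k" "Cy = hexagon_cycle n k p" by blast
    obtain C x y z where "p = (C,{x,y,z})" and v: "frame_triple n k C x y z"
      using frames_E[OF p(1)] .
    then have "Cy = (set (hexagon_walk C x y z), cycle_edges (hexagon_walk C x y z))"
      using p(2) hexagon_cycle_hexagon_walk[OF v] by simp
    then show "Cy \<in> cycles n k 6" using hexagon_walk_is_cycle_seq[OF v] unfolding cycles_def by blast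
  qed
qed

lemma Inter_Union_hexagon:
  assumes "p \<in> frames n k"
  shows "\<Inter> (hexagon p) = fst p" "\<Union> (hexagon p) = fst p \<union> snd p" "fst p \<inter> snd p = {}"
proof -
  obtain C x y z where p: "p = (C,{x,y,z})" "frame_triple n k C x y z"
    using frames_E[OF assms] by blast
  have d: "x \<notin> C" "y \<notin> C" "z \<notin> C" "x \<noteq> y" "y \<noteq> z" "x \<noteq> z"
    using p(2) unfolding frame_triple_def by auto
  then have h: "hexagon p = set (hexagon_walk C x y z)" using set_hexagon_walk p(1) by simp
  have "\<Inter> (set (hexagon_walk C x y z)) = C" using d unfolding hexagon_walk_def by auto
  then show "\<Inter> (hexagon p) = fst p" using h p(1) by simp
  have "\<Union> (set (hexagon_walk C x y z)) = C \<union> {x,y,z}" unfolding hexagon_walk_def by auto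
  then show "\<Union> (hexagon p) = fst p \<union> snd p" using h p(1) by simp
  show "fst p \<inter> snd p = {}" using d p(1) by simp
qed

lemma inj_on_hexagon_cycle: "inj_on (hexagon_cycle n k) (frames n k)"
proof
  fix p p' assume p: "p \<in> frames n k" and p': "p' \<in> frames n k"
    and "hexagon_cycle n k p = hexagon_cycle n k p'"
  then have e: "hexagon p = hexagon p'" by (simp add: hexagon_cycle_def)
  have "fst p = fst p'" using Inter_Union_hexagon(1)[OF p] Inter_Union_hexagon(1)[OF p'] e
    by simp
  moreover have "snd p = snd p'"
  proof -
    have "snd p = (fst p \<union> snd p) - fst p" using Inter_Union_hexagon(3)[OF p] by blast
    also have "\<dots> = (fst p' \<union> snd p') - fst p'"
      using Inter_Union_hexagon(2)[OF p] Inter_Union_hexagon(2)[OF p'] e \<open>fst p = fst p'\<close> by simp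
    also have "\<dots> = snd p'" using Inter_Union_hexagon(3)[OF p'] by blast
    finally show ?thesis .
  qed
  ultimately show "p = p'" by (simp add: prod_eq_iff)
qed

lemma contains_path_hexagon_cycle_iff:
  assumes "is_path n k us"
  shows "contains_path (hexagon_cycle n k p) us \<longleftrightarrow> set us \<subseteq> hexagon p"
proof
  assume "contains_path (hexagon_cycle n k p) us"
  then show "set us \<subseteq> hexagon p" unfolding contains_path_def hexagon_cycle_def by simp
next
  assume s: "set us \<subseteq> hexagon p"
  have "path_edges us \<subseteq> induced_edges n k (hexagon p)"
  proof
    fix e assume "e \<in> path_edges us"
    then obtain j where j: "e = {us ! j, us ! Suc j}" "Suc j < length us"
      unfolding path_edges_def by blast
    have "us ! j \<in> set us" "us ! Suc j \<in> set us" using j(2) by simp_all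
    with s have "us ! j \<in> hexagon p" "us ! Suc j \<in> hexagon p" by blast+
    with is_path_jadj[OF assms j(2)] show "e \<in> induced_edges n k (hexagon p)"
      unfolding induced_edges_def j(1) by blast
  qed
  then show "contains_path (hexagon_cycle n k p) us"
    using s unfolding contains_path_def hexagon_cycle_def by simp
qed

lemma num_cycles_containing_6_eq_card_frames:
  assumes "is_path n k us"
  shows "num_cycles_containing n k 6 us = card {p \<in> frames n k. set us \<subseteq> hexagon p}"
proof -
  have "{C \<in> cycles n k 6. contains_path C us}
      = hexagon_cycle n k ` {p \<in> frames n k. contains_path (hexagon_cycle n k p) us}"
    unfolding cycles_6_eq by blast
  also have "\<dots> = hexagon_cycle n k ` {p \<in> frames n k. set us \<subseteq> hexagon p}"
    using contains_path_hexagon_cycle_iff[OF assms] by simp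
  finally have "{C \<in> cycles n k 6. contains_path C us}
      = hexagon_cycle n k ` {p \<in> frames n k. set us \<subseteq> hexagon p}" .
  moreover have "inj_on (hexagon_cycle n k) {p \<in> frames n k. set us \<subseteq> hexagon p}"
    by (rule inj_on_subset[OF inj_on_hexagon_cycle]) blast
  ultimately show ?thesis unfolding num_cycles_containing_def by (simp add: card_image)
qed

subsection \<open>Counting the hexagons through a path\<close>

definition edge_frame :: "nat \<Rightarrow> nat set \<Rightarrow> nat \<times> nat \<Rightarrow> nat set \<times> nat set" where
  "edge_frame a A q = (A - {fst q}, {fst q, a, snd q})"

lemma frames_through_edge:
  assumes A: "A \<in> V1 n k" and a: "a \<in> {1..n}" "a \<notin> A"
  shows "{p \<in> frames n k. A \<in> hexagon p \<and> insert a A \<in> hexagon p}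
       = edge_frame a A ` (A \<times> ({1..n} - insert a A))"
proof
  have fA: "finite A" using A vertex_finite by blast
  have cA: "card A = k" "A \<subseteq> {1..n}" using A by (auto simp: V1_def)
  show "edge_frame a A ` (A \<times> ({1..n} - insert a A)) \<subseteq> {p \<in> frames n k. A \<in> hexagon p \<and> insert a A \<in> hexagon p}"
  proof (rule image_subsetI)
    fix q assume "q \<in> A \<times> ({1..n} - insert a A)"
    then obtain b z where q: "q = (b,z)" and bz: "b \<in> A" "z \<in> {1..n}" "z \<notin> insert a A"
      by blast
    have "Suc (card (A - {b})) = k" using cA fA bz(1) card_Suc_Diff1 by metis
    moreover have "card {b,a,z} = 3" using bz a by (auto simp: card_insert_if)
    ultimately have "(A - {b}, {b,a,z}) \<in> frames n k" unfolding frames_def using cA bz a by auto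
    moreover have "A \<in> hexagon (A - {b}, {b,a,z})" "insert a A \<in> hexagon (A - {b}, {b,a,z})"
      unfolding mem_hexagon using bz a by auto
    ultimately show "edge_frame a A q \<in> {p \<in> frames n k. A \<in> hexagon p \<and> insert a A \<in> hexagon p}"
      by (simp add: q edge_frame_def)
  qed
  show "{p \<in> frames n k. A \<in> hexagon p \<and> insert a A \<in> hexagon p} \<subseteq> edge_frame a A ` (A \<times> ({1..n} - insert a A))"
  proof
    fix p assume "p \<in> {p \<in> frames n k. A \<in> hexagon p \<and> insert a A \<in> hexagon p}"
    then obtain C X where CX: "(C,X) \<in> frames n k" "A \<in> hexagon (C,X)" "insert a A \<in> hexagon (C,X)"
      and pCX: "p = (C,X)" by (cases p) auto
    have p: "C \<subseteq> {1..n}" "Suc (card C) = k" "X \<subseteq> {1..n}" "C \<inter> X = {}" "card X = 3"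
      using CX(1) unfolding frames_def by simp_all
    have t: "C \<subset> A" "A \<subset> C \<union> X" "insert a A \<subset> C \<union> X"
      using CX(2,3) unfolding mem_hexagon by simp_all
    have "card (A - C) = 1" using card_Diff_subset[of C A] t(1) cA p(2) fA finite_subset by fastforce
    then obtain b where b: "A - C = {b}" using card_1_singletonE by blast
    have bA: "b \<in> A" "b \<notin> C" using b by blast+
    have C: "C = A - {b}" using b t(1) by blast
    have bX: "b \<in> X" using bA t(2) by blast
    have aX: "a \<in> X" using t(3) t(1) a(2) by blast
    have "finite X" using p(3) finite_subset by blast
    then have "card (X - {b,a}) = 1" using card_Diff_subset[of "{b,a}" X] bX aX bA a(2) p(5)
      by (cases "b = a") auto
    then obtain z where z: "X - {b,a} = {z}" using card_1_singletonE by blast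
    have X: "X = {b,a,z}" using z bX aX by blast
    have "z \<in> {1..n}" "z \<notin> insert a A" using z p(3) p(4) C bA by blast+
    then show "p \<in> edge_frame a A ` (A \<times> ({1..n} - insert a A))"
      using bA unfolding pCX C X edge_frame_def by (intro image_eqI[of _ _ "(b,z)"]) auto
  qed
qed

lemma inj_on_edge_frame: "inj_on (edge_frame a A) (A \<times> ({1..n} - insert a A))"
proof (rule inj_onI)
  fix q q' assume "q \<in> A \<times> ({1..n} - insert a A)" "q' \<in> A \<times> ({1..n} - insert a A)"
    and e: "edge_frame a A q = edge_frame a A q'"
  then obtain b z b' z' where bz: "q = (b,z)" "q' = (b',z')"
    and m: "b \<in> A" "z \<notin> insert a A" "b' \<in> A" "z' \<notin> insert a A"
    by (cases q, cases q') auto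
  have "A - {b} = A - {b'}" "z \<in> {b',a,z'}" using e unfolding bz edge_frame_def by auto
  then show "q = q'" using m bz by auto
qed

lemma card_frames_through_edge_where:
  assumes A: "A \<in> V1 n k" and a: "a \<in> {1..n}" "a \<notin> A"
  shows "card {p \<in> frames n k. A \<in> hexagon p \<and> insert a A \<in> hexagon p \<and> P p}
       = card {q \<in> A \<times> ({1..n} - insert a A). P (edge_frame a A q)}"
proof -
  have "{p \<in> frames n k. A \<in> hexagon p \<and> insert a A \<in> hexagon p \<and> P p}
      = {p \<in> {p \<in> frames n k. A \<in> hexagon p \<and> insert a A \<in> hexagon p}. P p}" by blast
  also have "\<dots> = {p \<in> edge_frame a A ` (A \<times> ({1..n} - insert a A)). P p}"
    unfolding frames_through_edge[OF A a] ..
  also have "\<dots> = edge_frame a A ` {q \<in> A \<times> ({1..n} - insert a A). P (edge_frame a A q)}" by blast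
  finally have "{p \<in> frames n k. A \<in> hexagon p \<and> insert a A \<in> hexagon p \<and> P p}
      = edge_frame a A ` {q \<in> A \<times> ({1..n} - insert a A). P (edge_frame a A q)}" .
  moreover have "inj_on (edge_frame a A) {q \<in> A \<times> ({1..n} - insert a A). P (edge_frame a A q)}"
    by (rule inj_on_subset[OF inj_on_edge_frame]) blast
  ultimately show ?thesis by (simp add: card_image)
qed

lemma card_outside_edge:
  assumes A: "A \<in> V1 n k" and a: "a \<in> {1..n}" "a \<notin> A"
  shows "card ({1..n} - insert a A) = n - k - 1"
proof -
  have fA: "finite A" using A vertex_finite by blast
  moreover have "card A = k" "A \<subseteq> {1..n}" using A unfolding V1_def by auto
  ultimately have "card (insert a A) = Suc k" "insert a A \<subseteq> {1..n}" using a by auto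
  then show ?thesis using card_Diff_subset[of "insert a A" "{1..n}"] fA by simp
qed

lemma mem_hexagon_edge_frame_delete:
  assumes "b \<in> A" "z \<notin> insert a A" "a \<notin> A" "b0 \<in> A"
  shows "insert a A - {b0} \<in> hexagon (edge_frame a A (b,z)) \<longleftrightarrow> b = b0"
  using assms unfolding mem_hexagon edge_frame_def by auto

lemma mem_hexagon_edge_frame_insert:
  assumes "b \<in> A" "z \<notin> insert a A" "a \<notin> A" "c \<notin> insert a A"
  shows "insert c A \<in> hexagon (edge_frame a A (b,z)) \<longleftrightarrow> c = z"
  using assms unfolding mem_hexagon edge_frame_def by auto

lemma mem_hexagon_edge_frame_insert_delete:
  assumes "b \<in> A" "z \<notin> insert a A" "a \<notin> A" "b0 \<in> A" "c \<notin> insert a A"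
  shows "insert c (insert a A - {b0}) \<in> hexagon (edge_frame a A (b,z)) \<longleftrightarrow> b = b0 \<and> c = z"
  using assms unfolding mem_hexagon edge_frame_def by auto

lemma card_frames_containing_edge:
  assumes A: "A \<in> V1 n k" and a: "a \<in> {1..n}" "a \<notin> A"
  shows "card {p \<in> frames n k. {A, insert a A} \<subseteq> hexagon p} = k * (n - k - 1)"
proof -
  have "card {p \<in> frames n k. {A, insert a A} \<subseteq> hexagon p}
      = card {q \<in> A \<times> ({1..n} - insert a A). True}"
    using card_frames_through_edge_where[OF A a, of "\<lambda>_. True"] by simp
  also have "\<dots> = card A * card ({1..n} - insert a A)" by (simp add: card_cartesian_product)
  finally show ?thesis using card_outside_edge[OF A a] A by (simp add: V1_def)
qed

lemma card_frames_containing_edge_delete: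
  assumes A: "A \<in> V1 n k" and a: "a \<in> {1..n}" "a \<notin> A" and b0: "b0 \<in> A"
  shows "card {p \<in> frames n k. {A, insert a A, insert a A - {b0}} \<subseteq> hexagon p} = n - k - 1"
proof -
  have "{q \<in> A \<times> ({1..n} - insert a A). insert a A - {b0} \<in> hexagon (edge_frame a A q)}
      = {b0} \<times> ({1..n} - insert a A)"
    using mem_hexagon_edge_frame_delete[OF _ _ a(2) b0] b0 by auto
  then have "card {p \<in> frames n k. {A, insert a A, insert a A - {b0}} \<subseteq> hexagon p}
      = card ({b0} \<times> ({1..n} - insert a A))"
    using card_frames_through_edge_where[OF A a, of "\<lambda>p. insert a A - {b0} \<in> hexagon p"] by simp
  then show ?thesis using card_outside_edge[OF A a] by (simp add: card_cartesian_product)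
qed

lemma card_frames_containing_edge_insert:
  assumes A: "A \<in> V1 n k" and a: "a \<in> {1..n}" "a \<notin> A" and c: "c \<in> {1..n}" "c \<notin> insert a A"
  shows "card {p \<in> frames n k. {A, insert a A, insert c A} \<subseteq> hexagon p} = k"
proof -
  have "{q \<in> A \<times> ({1..n} - insert a A). insert c A \<in> hexagon (edge_frame a A q)} = A \<times> {c}"
    using mem_hexagon_edge_frame_insert[OF _ _ a(2) c(2)] c by auto
  then have "card {p \<in> frames n k. {A, insert a A, insert c A} \<subseteq> hexagon p} = card (A \<times> {c})"
    using card_frames_through_edge_where[OF A a, of "\<lambda>p. insert c A \<in> hexagon p"] by simp
  then show ?thesis using A by (simp add: card_cartesian_product V1_def)
qed

lemma card_frames_containing_edge_delete_insert:
  assumes A: "A \<in> V1 n k" and a: "a \<in> {1..n}" "a \<notin> A" and b0: "b0 \<in> A"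
    and c: "c \<in> {1..n}" "c \<notin> insert a A"
  shows "card {p \<in> frames n k.
      {A, insert a A, insert a A - {b0}, insert c (insert a A - {b0})} \<subseteq> hexagon p} = 1"
proof -
  have "{q \<in> A \<times> ({1..n} - insert a A). insert a A - {b0} \<in> hexagon (edge_frame a A q)
      \<and> insert c (insert a A - {b0}) \<in> hexagon (edge_frame a A q)} = {(b0,c)}"
    using mem_hexagon_edge_frame_insert_delete[OF _ _ a(2) b0 c(2)]
      mem_hexagon_edge_frame_delete[OF _ _ a(2) b0] b0 c by auto
  then show ?thesis
    using card_frames_through_edge_where[OF A a,
        of "\<lambda>p. insert a A - {b0} \<in> hexagon p \<and> insert c (insert a A - {b0}) \<in> hexagon p"]
    by simp
qed

lemma jadj_E:
  assumes "jadj n k u v"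
  obtains A a where "A \<in> V1 n k" "a \<in> {1..n}" "a \<notin> A" "{u,v} = {A, insert a A}"
proof (cases "u \<in> V1 n k")
  case True
  then obtain a where "a \<in> {1..n}" "a \<notin> u" "v = insert a u" using jadj_V1_E[OF assms] by blast
  then show thesis using that True by blast
next
  case False
  then have "u \<in> V2 n k" using assms unfolding jadj_def by blast
  then obtain a where "v \<in> V1 n k" "a \<in> {1..n}" "a \<notin> v" "u = insert a v"
    using jadj_V2_E[OF assms] by blast
  then show thesis using that by (simp add: insert_commute)
qed

lemma num_cycles_containing_path_2:
  assumes p: "is_path n k us" and l: "length us = 2"
  shows "num_cycles_containing n k 6 us = k * (n - k - 1)"
proof -
  obtain u0 u1 where us: "us = [u0,u1]" using l by (auto simp: length_Suc_conv numeral_eq_Suc)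
  have "jadj n k u0 u1" using is_path_jadj[OF p, of 0] us by simp
  then obtain A a where Aa: "A \<in> V1 n k" "a \<in> {1..n}" "a \<notin> A" "{u0,u1} = {A, insert a A}"
    by (rule jadj_E)
  then show ?thesis
    using num_cycles_containing_6_eq_card_frames[OF p] card_frames_containing_edge[OF Aa(1-3)] us
    by simp
qed

lemma num_cycles_containing_path_3_V1:
  assumes p: "is_path n k us" and l: "length us = 3" and u2V: "us ! 2 \<in> V1 n k"
  shows "num_cycles_containing n k 6 us = n - k - 1"
proof -
  obtain u0 u1 u2 where us: "us = [u0,u1,u2]" using l by (auto simp: length_Suc_conv numeral_eq_Suc)
  have j10: "jadj n k u1 u0" using is_path_jadj[OF p, of 0] us jadj_sym by simp
  have j21: "jadj n k u2 u1" using is_path_jadj[OF p, of 1] us jadj_sym by simp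
  have d: "u0 \<noteq> u2" using p us unfolding is_path_def by simp
  obtain c where c: "u1 \<in> V2 n k" "c \<notin> u2" "u1 = insert c u2"
    using jadj_V1_E[OF j21] u2V us by auto
  obtain a where a: "u0 \<in> V1 n k" "a \<in> {1..n}" "a \<notin> u0" "u1 = insert a u0"
    using jadj_V2_E[OF j10 c(1)] by blast
  have "c \<noteq> a"
  proof
    assume "c = a"
    then have "u0 = u2" using a c insert_ident by metis
    then show False using d by simp
  qed
  then have "c \<in> u0" "u2 = insert a u0 - {c}" using a(4) c by auto
  then have "set us = {u0, insert a u0, insert a u0 - {c}}" using us a(4) by auto
  then show ?thesis using num_cycles_containing_6_eq_card_frames[OF p]
      card_frames_containing_edge_delete[OF a(1-3) \<open>c \<in> u0\<close>] by simp
qed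

lemma num_cycles_containing_path_3_V2:
  assumes p: "is_path n k us" and l: "length us = 3" and u2V: "us ! 2 \<in> V2 n k"
  shows "num_cycles_containing n k 6 us = k"
proof -
  obtain u0 u1 u2 where us: "us = [u0,u1,u2]" using l by (auto simp: length_Suc_conv numeral_eq_Suc)
  have j10: "jadj n k u1 u0" using is_path_jadj[OF p, of 0] us jadj_sym by simp
  have j21: "jadj n k u2 u1" using is_path_jadj[OF p, of 1] us by (simp add: jadj_sym)
  have d: "u0 \<noteq> u2" using p us unfolding is_path_def by simp
  obtain c where c: "u1 \<in> V1 n k" "c \<in> {1..n}" "c \<notin> u1" "u2 = insert c u1"
    using jadj_V2_E[OF j21] u2V us by auto
  obtain a where a: "a \<in> {1..n}" "a \<notin> u1" "u0 = insert a u1"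
    using jadj_V1_E[OF j10 c(1)] by blast
  have "c \<notin> insert a u1" using a c d by blast
  moreover have "set us = {u1, insert a u1, insert c u1}" using us a(3) c(4) by auto
  ultimately show ?thesis using num_cycles_containing_6_eq_card_frames[OF p]
      card_frames_containing_edge_insert[OF c(1) a(1,2) c(2)] by simp
qed

lemma card_frames_containing_path_4_from_V1:
  assumes p: "is_path n k [u0,u1,u2,u3]" and u0: "u0 \<in> V1 n k"
  shows "card {p \<in> frames n k. set [u0,u1,u2,u3] \<subseteq> hexagon p} = 1"
proof -
  have j: "jadj n k u0 u1" "jadj n k u1 u2" "jadj n k u2 u3"
    using is_path_jadj[OF p, of 0] is_path_jadj[OF p, of 1] is_path_jadj[OF p, of 2] by simp_all
  have d: "u0 \<noteq> u2" "u1 \<noteq> u3" using p unfolding is_path_def by auto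
  obtain a where a: "u1 \<in> V2 n k" "a \<in> {1..n}" "a \<notin> u0" "u1 = insert a u0"
    using jadj_V1_E[OF j(1) u0] by blast
  obtain b where b: "u2 \<in> V1 n k" "b \<notin> u2" "u1 = insert b u2"
    using jadj_V2_E[OF j(2) a(1)] by blast
  obtain c where c: "c \<in> {1..n}" "c \<notin> u2" "u3 = insert c u2"
    using jadj_V1_E[OF j(3) b(1)] by blast
  have "b \<noteq> a"
  proof
    assume "b = a"
    then have "u0 = u2" using a b insert_ident by metis
    then show False using d by simp
  qed
  then have "b \<in> u0" "u2 = insert a u0 - {b}" using a(4) b by auto
  moreover have "c \<noteq> b" using d b c by blast
  ultimately have "c \<notin> insert a u0"
    and "set [u0,u1,u2,u3] = {u0, insert a u0, insert a u0 - {b}, insert c (insert a u0 - {b})}"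
    using a(4) c by auto
  then show ?thesis
    using card_frames_containing_edge_delete_insert[OF u0 a(2,3) \<open>b \<in> u0\<close> c(1)] by simp
qed

lemma num_cycles_containing_path_4:
  assumes p: "is_path n k us" and l: "length us = 4"
  shows "num_cycles_containing n k 6 us = 1"
proof -
  obtain u0 u1 u2 u3 where us: "us = [u0,u1,u2,u3]" using l by (auto simp: length_Suc_conv numeral_eq_Suc)
  have "card {p \<in> frames n k. set us \<subseteq> hexagon p} = 1"
  proof (cases "u0 \<in> V1 n k")
    case True
    then show ?thesis using card_frames_containing_path_4_from_V1 p us by simp
  next
    case False
    have j: "jadj n k u0 u1" "jadj n k u1 u2" "jadj n k u2 u3"
      using is_path_jadj[OF p, of 0] is_path_jadj[OF p, of 1] is_path_jadj[OF p, of 2] us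
      by simp_all
    have "u0 \<in> V2 n k" using False p us unfolding is_path_def by auto
    then have "u1 \<in> V1 n k" using jadj_V2_E[OF j(1)] by blast
    then have "u2 \<in> V2 n k" using jadj_V1_E[OF j(2)] by blast
    then have "u3 \<in> V1 n k" using jadj_V2_E[OF j(3)] by blast
    moreover have "is_path n k [u3,u2,u1,u0]" using is_path_rev[OF p] us by simp
    ultimately have "card {p \<in> frames n k. set [u3,u2,u1,u0] \<subseteq> hexagon p} = 1"
      using card_frames_containing_path_4_from_V1 by blast
    moreover have "set us = set [u3,u2,u1,u0]" using us by auto
    ultimately show ?thesis by (simp only:)
  qed
  then show ?thesis using num_cycles_containing_6_eq_card_frames[OF p] by simp
qed

theorem proposition2p1:
  fixes n k :: nat and us :: "nat set list"
  assumes "1 \<le> k" and "2 * k + 1 \<le> n" and "is_path n k us"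
  shows "(length us = 4 \<longrightarrow> num_cycles_containing n k 6 us = 1)
     \<and> (length us = 3 \<and> us ! 2 \<in> V1 n k \<longrightarrow> num_cycles_containing n k 6 us = n - k - 1)
     \<and> (length us = 3 \<and> us ! 2 \<in> V2 n k \<longrightarrow> num_cycles_containing n k 6 us = k)
     \<and> (length us = 2 \<longrightarrow> num_cycles_containing n k 6 us = k * (n - k - 1))"
  using num_cycles_containing_path_4 num_cycles_containing_path_3_V1
    num_cycles_containing_path_3_V2 num_cycles_containing_path_2 assms(3)
  by blast

end
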